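(* Let $\{x^k\}$ be generated by the ABP algorithm described in the context, and assume (A1)–(A7): (A1) $\mathcal F$ is continuously differentiable; (A2) $C$, $Q$ nonempty closed convex, $z_i^*>-\infty$ for each $i$; (A3) each $f_i$ convex; (A4) $\Omega\ne\emptyset$; (A5) $\lambda_k>0$, $\sum\lambda_k=\infty$, $\sum\lambda_k^2<\infty$; (A6) $0<\underline\alpha\le\alpha_k\le\bar\alpha$, $0<\underline\beta\le\beta_k\le\bar\beta$, $0<\underline\gamma\le\gamma_k\le\bar\gamma$ for all $k$; (A7) $\varphi_{\mathrm{lb}}=\varphi^*$. Then $\sum_{k=0}^\infty\lambda_k\Phi_k<\infty$.
   Context: Let $n,m\ge1$, $\mathcal F=(f_1,\dots,f_m)\colon\mathbb R^n\to\mathbb R^m$, $C\subset\mathbb R^n$, $Q\subset\mathbb R^m$, $Q^+:=Q-\mathbb R^m_+=\{y-u:y\in Q,u\in\mathbb R^m_+\}$; $P_S$ is Euclidean projection onto a nonempty closed convex set $S$. Let $z_i^*:=\inf_{x\in C}f_i(x)$, fix $r$ with $r_i>0$, $\sum r_i=1$. Define $\varphi(x):=\max_ir_i(f_i(x)-z_i^* )$, $H(x):=\tfrac12\mathrm{dist}^2(x,C)$, $G(x):=\tfrac12\mathrm{dist}^2(\mathcal F(x),Q^+)$, $\mathcal S:=\{x:H(x)=0,G(x)=0\}$, $\varphi^*:=\inf_{\mathcal S}\varphi$, $\Omega:=\{x\in\mathcal S:\varphi(x)=\varphi^*\}$, $\varphi_{\mathrm{lb}}:=\inf_C\varphi$.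 ABP algorithm: given $x^0$, $\mu>0$, positive sequences $\{\alpha_k\},\{\beta_k\},\{\gamma_k\},\{\lambda_k\}$: $p^k:=P_{Q^+}(\mathcal F(x^k))$, $\rho^k:=\mathcal F(x^k)-p^k$, $z^k:=x^k-P_C(x^k)$, $v^k:=J_{\mathcal F}(x^k)^T\rho^k$, $w^k:=r_{i^*}\nabla f_{i^*}(x^k)$ with arbitrary $i^*\in\arg\max_ir_i(f_i(x^k)-z_i^* )$, $\Delta_k:=\varphi(x^k)-\varphi_{\mathrm{lb}}$, $d^k:=\alpha_k\mathbf 1_{\{\Delta_k\ge0\}}w^k+\beta_kz^k+\gamma_kv^k$, $\eta_k:=\max(\mu,\|d^k\|)$, $x^{k+1}:=x^k-(\lambda_k/\eta_k)d^k$. Notation: $H_k:=H(x^k)$, $G_k:=G(x^k)$, $\Delta_k^+:=\max(\Delta_k,0)$, $\Phi_k:=\alpha_k\Delta_k^++\beta_kH_k+\gamma_kG_k$. *)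

theory Defs
  imports "HOL-Analysis.Analysis"
begin

definition Qplus :: "(real^'m) set \<Rightarrow> (real^'m) set" where
  "Qplus Q = {y - u | y u. y \<in> Q \<and> (\<forall>i. 0 \<le> u $ i)}"

definition zstar :: "(real^'n \<Rightarrow> real^'m) \<Rightarrow> (real^'n) set \<Rightarrow> 'm \<Rightarrow> real" where
  "zstar F C i = Inf ((\<lambda>x. F x $ i) ` C)"

definition phi :: "(real^'n \<Rightarrow> real^'m) \<Rightarrow> (real^'n) set \<Rightarrow> real^'m \<Rightarrow> real^'n \<Rightarrow> real" where
  "phi F C r x = Max (range (\<lambda>i. r $ i * (F x $ i - zstar F C i)))"

definition Hfun :: "(real^'n) set \<Rightarrow> real^'n \<Rightarrow> real" where
  "Hfun C x = (infdist x C)^2 / 2"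

definition Gfun :: "(real^'n \<Rightarrow> real^'m) \<Rightarrow> (real^'m) set \<Rightarrow> real^'n \<Rightarrow> real" where
  "Gfun F Q x = (infdist (F x) (Qplus Q))^2 / 2"

definition feas :: "(real^'n \<Rightarrow> real^'m) \<Rightarrow> (real^'n) set \<Rightarrow> (real^'m) set \<Rightarrow> (real^'n) set" where
  "feas F C Q = {x. Hfun C x = 0 \<and> Gfun F Q x = 0}"

definition phistar :: "(real^'n \<Rightarrow> real^'m) \<Rightarrow> (real^'n) set \<Rightarrow> (real^'m) set \<Rightarrow> real^'m \<Rightarrow> real" where
  "phistar F C Q r = Inf (phi F C r ` feas F C Q)"

definition Omega :: "(real^'n \<Rightarrow> real^'m) \<Rightarrow> (real^'n) set \<Rightarrow> (real^'m) set \<Rightarrow> real^'m \<Rightarrow> (real^'n) set" where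
  "Omega F C Q r = {x \<in> feas F C Q. phi F C r x = phistar F C Q r}"

definition philb :: "(real^'n \<Rightarrow> real^'m) \<Rightarrow> (real^'n) set \<Rightarrow> real^'m \<Rightarrow> real" where
  "philb F C r = Inf (phi F C r ` C)"

definition jac :: "(real^'n \<Rightarrow> real^'m) \<Rightarrow> real^'n \<Rightarrow> real^'n^'m" where
  "jac F x = matrix (frechet_derivative F (at x))"

text \<open>Projection onto Q^+ (taken onto its closure; equals P_{Q^+} whenever Q^+ is closed).\<close>
definition projQp :: "(real^'m) set \<Rightarrow> real^'m \<Rightarrow> real^'m" where
  "projQp Q y = closest_point (closure (Qplus Q)) y"

definition abp_dir :: "(real^'n \<Rightarrow> real^'m) \<Rightarrow> (real^'n) set \<Rightarrow> (real^'m) set \<Rightarrow> real^'m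
   \<Rightarrow> real \<Rightarrow> real \<Rightarrow> real \<Rightarrow> 'm \<Rightarrow> real^'n \<Rightarrow> real^'n" where
  "abp_dir F C Q r a b g i xk =
     (if phi F C r xk - philb F C r \<ge> 0 then a else 0) *\<^sub>R ((r $ i) *\<^sub>R (jac F xk $ i))
     + b *\<^sub>R (xk - closest_point C xk)
     + g *\<^sub>R (transpose (jac F xk) *v (F xk - projQp Q (F xk)))"

definition PhiK :: "(real^'n \<Rightarrow> real^'m) \<Rightarrow> (real^'n) set \<Rightarrow> (real^'m) set \<Rightarrow> real^'m
   \<Rightarrow> real \<Rightarrow> real \<Rightarrow> real \<Rightarrow> real^'n \<Rightarrow> real" where
  "PhiK F C Q r a b g xk =
     a * max (phi F C r xk - philb F C r) 0 + b * Hfun C xk + g * Gfun F Q xk"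

end

theory Submission
  imports Defs
begin

(* Fix w in Omega. The gradient inequality for the convex f_i, the projection inequalities for
   C and Q^+, and phi(w) = phi_lb (A7) give <d^k, x^k - w> >= Phi_k. The normalized step then yields
   |x^(k+1) - w|^2 <= |x^k - w|^2 - 2 (lambda_k / eta_k) Phi_k + lambda_k^2,
   so the iterates stay in a ball and sum (lambda_k / eta_k) Phi_k is finite. On that ball the
   directions are bounded by continuity, hence eta_k is bounded and sum lambda_k Phi_k is finite. *)

lemma convex_on_above_tangent_has_derivative:
  fixes f :: "'a::real_normed_vector \<Rightarrow> real"
  assumes cvx: "convex_on UNIV f" and f': "(f has_derivative f') (at y)"
  shows "f y + f' (z - y) \<le> f z"
proof -
  define g where "g t = f (y + t *\<^sub>R (z - y))" for t :: real
  have "((\<lambda>t::real. y + t *\<^sub>R (z - y)) has_derivative (\<lambda>t. t *\<^sub>R (z - y))) (at 0)"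
    by (auto intro!: derivative_eq_intros)
  then have "(g has_derivative (\<lambda>t. f' (t *\<^sub>R (z - y)))) (at 0)"
    unfolding g_def by (rule has_derivative_compose) (simp add: f')
  then have "(g has_field_derivative f' (z - y)) (at 0)"
    by (rule has_derivative_imp_has_field_derivative)
       (simp add: linear_simps(5)[OF has_derivative_bounded_linear[OF f']])
  moreover have "convex_on UNIV g"
  proof (rule convex_onI)
    fix t a b :: real assume "0 < t" "t < 1"
    then show "g ((1 - t) *\<^sub>R a + t *\<^sub>R b) \<le> (1 - t) * g a + t * g b"
      using convex_onD[OF cvx, of t "y + a *\<^sub>R (z - y)" "y + b *\<^sub>R (z - y)"]
      unfolding g_def by (simp add: algebra_simps)
  qed simp
  ultimately have "f' (z - y) * (1 - 0) \<le> g 1 - g 0"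
    by (intro convex_on_imp_above_tangent) auto
  then show ?thesis unfolding g_def by simp
qed

lemma jac_row_inner:
  fixes F :: "real^'n \<Rightarrow> real^'m"
  assumes "F differentiable (at y)"
  shows "jac F y $ i \<bullet> v = frechet_derivative F (at y) v $ i"
  using assms unfolding jac_def
  by (metis frechet_derivative_works has_derivative_bounded_linear matrix_vector_mul(3)
      matrix_vector_mul_component)

lemma convex_component_above_tangent:
  fixes F :: "real^'n \<Rightarrow> real^'m"
  assumes "F differentiable (at y)" and "convex_on UNIV (\<lambda>z. F z $ i)"
  shows "F y $ i + jac F y $ i \<bullet> (z - y) \<le> F z $ i"
proof -
  have "((\<lambda>z. F z $ i) has_derivative (\<lambda>v. frechet_derivative F (at y) v $ i)) (at y)"
    using assms(1) frechet_derivative_works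
      bounded_linear.has_derivative[OF bounded_linear_vec_nth] by blast
  then show ?thesis
    using convex_on_above_tangent_has_derivative[OF assms(2)] jac_row_inner[OF assms(1)] by simp
qed

lemma closest_point_inner_ge_norm_sq:
  fixes S :: "'a::euclidean_space set"
  assumes "closed S" "convex S" "w \<in> S"
  shows "norm (y - closest_point S y) ^ 2 \<le> (y - closest_point S y) \<bullet> (y - w)"
proof -
  let ?p = "closest_point S y"
  have "(y - ?p) \<bullet> (y - w) = (y - ?p) \<bullet> (y - ?p) - (y - ?p) \<bullet> (w - ?p)"
    by (simp add: inner_diff_right)
  then show ?thesis
    using closest_point_dot[OF assms(2,1,3)] by (simp add: power2_norm_eq_inner)
qed

lemma infdist_sq_le_closest_point_inner:
  fixes S :: "'a::euclidean_space set"
  assumes "S \<noteq> {}" "convex S" "w \<in> closure S"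
  shows "infdist y S ^ 2 \<le> (y - closest_point (closure S) y) \<bullet> (y - w)"
proof -
  let ?p = "closest_point (closure S) y"
  have "?p \<in> closure S" using closest_point_in_set assms(1) by auto
  then have "infdist ?p S = 0" using in_closure_iff_infdist_zero[OF assms(1)] by blast
  then have "infdist y S \<le> norm (y - ?p)" using infdist_triangle[of y S ?p] by (simp add: dist_norm)
  then have "infdist y S ^ 2 \<le> norm (y - ?p) ^ 2" by (simp add: infdist_nonneg power_mono)
  also have "\<dots> \<le> (y - ?p) \<bullet> (y - w)"
    using closest_point_inner_ge_norm_sq assms(2,3) convex_closure by blast
  finally show ?thesis .
qed

lemma Hfun_le_inner:
  assumes "C \<noteq> {}" "closed C" "convex C" "w \<in> C"
  shows "Hfun C y \<le> (y - closest_point C y) \<bullet> (y - w)"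
proof -
  have "infdist y C ^ 2 \<le> (y - closest_point C y) \<bullet> (y - w)"
    using infdist_sq_le_closest_point_inner[of C w y] assms by simp
  then show ?thesis unfolding Hfun_def using zero_le_power2[of "infdist y C"] by linarith
qed

lemma Qplus_eq_differences: "Qplus Q = (\<Union>q\<in>Q. \<Union>u\<in>{u. \<forall>i. 0 \<le> u $ i}. {q - u})"
  unfolding Qplus_def by auto

lemma convex_Qplus:
  assumes "convex Q"
  shows "convex (Qplus Q)"
proof -
  have "convex {u::real^'m. \<forall>i. 0 \<le> u $ i}"
    unfolding convex_def by auto
  then show ?thesis
    unfolding Qplus_eq_differences by (intro convex_differences assms)
qed

lemma Qplus_nonempty:
  assumes "Q \<noteq> {}"
  shows "Qplus Q \<noteq> {}"
proof -
  obtain q where "q \<in> Q" using assms by blast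
  then have "q - 0 \<in> Qplus Q" unfolding Qplus_def by fastforce
  then show ?thesis by blast
qed

lemma closure_Qplus_diff_nonneg:
  assumes "p \<in> closure (Qplus Q)" "\<forall>i. 0 \<le> u $ i"
  shows "p - u \<in> closure (Qplus Q)"
proof -
  have "(\<lambda>z. z - u) ` Qplus Q \<subseteq> Qplus Q"
    using assms(2) unfolding Qplus_def
    by clarsimp (metis (no_types, lifting) add_nonneg_nonneg diff_diff_eq vector_add_component)
  then have "closure ((\<lambda>z. z - u) ` Qplus Q) \<subseteq> closure (Qplus Q)" by (rule closure_mono)
  then show ?thesis using assms(1) by (auto simp: closure_translation_subtract)
qed

lemma Omega_memD:
  assumes "w \<in> Omega F C Q r" and "C \<noteq> {}" "closed C" "Q \<noteq> {}"
  shows "w \<in> C" "F w \<in> closure (Qplus Q)" "phi F C r w = phistar F C Q r"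
proof -
  have "infdist w C = 0" "infdist (F w) (Qplus Q) = 0"
    using assms(1) unfolding Omega_def feas_def Hfun_def Gfun_def by auto
  then show "w \<in> C" "F w \<in> closure (Qplus Q)"
    using in_closure_iff_infdist_zero[OF assms(2)] closure_closed[OF assms(3)]
      in_closure_iff_infdist_zero[OF Qplus_nonempty[OF assms(4)]] by auto
  show "phi F C r w = phistar F C Q r" using assms(1) unfolding Omega_def by simp
qed

lemma phi_ge_component: "r $ i * (F y $ i - zstar F C i) \<le> phi F C r y"
  unfolding phi_def by (rule Max_ge) auto

lemma phi_eq_maximizing_component:
  assumes "\<forall>j. r $ j * (F y $ j - zstar F C j) \<le> r $ i * (F y $ i - zstar F C i)"
  shows "phi F C r y = r $ i * (F y $ i - zstar F C i)"
  unfolding phi_def by (rule Max_eqI) (use assms in auto)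

lemma phi_diff_le_active_gradient:
  fixes F :: "real^'n \<Rightarrow> real^'m"
  assumes "r $ i > 0" "F differentiable (at y)" "convex_on UNIV (\<lambda>z. F z $ i)"
    and "\<forall>j. r $ j * (F y $ j - zstar F C j) \<le> r $ i * (F y $ i - zstar F C i)"
  shows "phi F C r y - phi F C r w \<le> r $ i * (jac F y $ i \<bullet> (y - w))"
proof -
  have "F y $ i - F w $ i \<le> jac F y $ i \<bullet> (y - w)"
    using convex_component_above_tangent[OF assms(2,3), of w] by (simp add: inner_diff_right)
  then have "r $ i * (F y $ i - F w $ i) \<le> r $ i * (jac F y $ i \<bullet> (y - w))"
    using assms(1) by simp
  then show ?thesis
    using phi_eq_maximizing_component[OF assms(4)] phi_ge_component[of r i F w C]
    by (simp add: right_diff_distrib)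
qed

lemma jac_linearization_ge:
  fixes F :: "real^'n \<Rightarrow> real^'m"
  assumes "F differentiable (at y)" "\<forall>j. convex_on UNIV (\<lambda>z. F z $ j)"
  shows "0 \<le> (jac F y *v (y - w) - (F y - F w)) $ j"
  using convex_component_above_tangent[OF assms(1), of j w] assms(2)
  by (simp add: matrix_vector_mul_component inner_diff_right)

lemma Gfun_le_inner:
  fixes F :: "real^'n \<Rightarrow> real^'m"
  assumes "F differentiable (at y)" "\<forall>j. convex_on UNIV (\<lambda>z. F z $ j)"
    and "Q \<noteq> {}" "convex Q" "F w \<in> closure (Qplus Q)"
  shows "Gfun F Q y \<le> (transpose (jac F y) *v (F y - projQp Q (F y))) \<bullet> (y - w)"
proof -
  let ?p = "projQp Q (F y)"
  define u where "u = jac F y *v (y - w) - (F y - F w)"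
  have cQ: "closed (closure (Qplus Q))" "convex (closure (Qplus Q))"
    using convex_Qplus[OF assms(4)] convex_closure by auto
  have "?p \<in> closure (Qplus Q)"
    unfolding projQp_def using closest_point_in_set Qplus_nonempty[OF assms(3)] by auto
  \<comment> \<open>By convexity u is componentwise nonnegative, so p - u competes with p for the projection.\<close>
  then have "?p - u \<in> closure (Qplus Q)"
    using closure_Qplus_diff_nonneg jac_linearization_ge[OF assms(1,2)] unfolding u_def by blast
  then have "(F y - ?p) \<bullet> ((?p - u) - ?p) \<le> 0"
    using closest_point_dot[OF cQ(2,1)] unfolding projQp_def by blast
  then have "0 \<le> (F y - ?p) \<bullet> u" by (simp add: inner_diff_right)
  moreover have "infdist (F y) (Qplus Q) ^ 2 \<le> (F y - ?p) \<bullet> (F y - F w)"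
    unfolding projQp_def
    by (rule infdist_sq_le_closest_point_inner[OF Qplus_nonempty convex_Qplus]) (use assms in auto)
  moreover have "(transpose (jac F y) *v (F y - ?p)) \<bullet> (y - w)
      = (F y - ?p) \<bullet> u + (F y - ?p) \<bullet> (F y - F w)"
    unfolding u_def
    by (simp add: dot_lmul_matrix[symmetric] inner_diff_right)
  ultimately show ?thesis
    unfolding Gfun_def using zero_le_power2[of "infdist (F y) (Qplus Q)"] by linarith
qed

lemma PhiK_nonneg: "0 \<le> a \<Longrightarrow> 0 \<le> b \<Longrightarrow> 0 \<le> g \<Longrightarrow> 0 \<le> PhiK F C Q r a b g y"
  unfolding PhiK_def Hfun_def Gfun_def by simp

lemma PhiK_le_abp_dir_inner:
  fixes F :: "real^'n \<Rightarrow> real^'m"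
  assumes r_pos: "\<forall>i. r $ i > 0"
    and dF: "F differentiable (at y)" and cvx: "\<forall>j. convex_on UNIV (\<lambda>z. F z $ j)"
    and C: "C \<noteq> {}" "closed C" "convex C" and Q: "Q \<noteq> {}" "convex Q"
    and w: "w \<in> Omega F C Q r" and lb: "philb F C r = phistar F C Q r"
    and i: "\<forall>j. r $ j * (F y $ j - zstar F C j) \<le> r $ i * (F y $ i - zstar F C i)"
    and weights: "0 \<le> a" "0 \<le> b" "0 \<le> g"
  shows "PhiK F C Q r a b g y \<le> abp_dir F C Q r a b g i y \<bullet> (y - w)"
proof -
  let ?\<Delta> = "phi F C r y - philb F C r"
  let ?a = "if ?\<Delta> \<ge> 0 then a else 0"
  let ?v = "transpose (jac F y) *v (F y - projQp Q (F y))"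
  have "?\<Delta> \<le> r $ i * (jac F y $ i \<bullet> (y - w))"
    using phi_diff_le_active_gradient[OF r_pos[rule_format] dF cvx[rule_format] i, of w]
      Omega_memD(3)[OF w C(1,2) Q(1)] lb by simp
  then have "a * max ?\<Delta> 0 \<le> ?a * (r $ i * (jac F y $ i \<bullet> (y - w)))"
    using weights(1) by (auto intro: mult_left_mono)
  moreover have "b * Hfun C y \<le> b * ((y - closest_point C y) \<bullet> (y - w))"
    using Hfun_le_inner[OF C Omega_memD(1)[OF w C(1,2) Q(1)]] weights(2) by (rule mult_left_mono)
  moreover have "g * Gfun F Q y \<le> g * (?v \<bullet> (y - w))"
    using Gfun_le_inner[OF dF cvx Q Omega_memD(2)[OF w C(1,2) Q(1)]] weights(3)
    by (rule mult_left_mono)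
  moreover have "abp_dir F C Q r a b g i y \<bullet> (y - w) = ?a * (r $ i * (jac F y $ i \<bullet> (y - w)))
      + b * ((y - closest_point C y) \<bullet> (y - w)) + g * (?v \<bullet> (y - w))"
    unfolding abp_dir_def by (simp only: inner_add_left inner_scaleR_left mult.assoc)
  ultimately show ?thesis unfolding PhiK_def by linarith
qed

lemma continuous_on_Gfun_direction:
  fixes F :: "real^'n \<Rightarrow> real^'m"
  assumes dF: "\<forall>y. F differentiable (at y)" and cJ: "continuous_on UNIV (jac F)"
    and Q: "Q \<noteq> {}" "convex Q"
  shows "continuous_on UNIV (\<lambda>y. transpose (jac F y) *v (F y - projQp Q (F y)))"
proof -
  have cF: "continuous_on UNIV F"
    using dF differentiable_at_imp_differentiable_on differentiable_imp_continuous_on by blast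
  have cP: "continuous_on UNIV (projQp Q)" unfolding projQp_def
    by (rule continuous_on_closest_point)
       (use convex_Qplus[OF Q(2)] Qplus_nonempty[OF Q(1)] convex_closure in auto)
  have "continuous_on UNIV (\<lambda>y. \<chi> j. \<Sum>i\<in>UNIV. jac F y $ i $ j * (F y - projQp Q (F y)) $ i)"
    by (intro continuous_intros cJ cF continuous_on_compose2[OF cP cF]) auto
  then show ?thesis by (simp add: matrix_vector_mult_def transpose_def)
qed

lemma abp_dir_bounded_on_compact:
  fixes F :: "real^'n \<Rightarrow> real^'m"
  assumes dF: "\<forall>y. F differentiable (at y)" and cJ: "continuous_on UNIV (jac F)"
    and C: "C \<noteq> {}" "closed C" "convex C" and Q: "Q \<noteq> {}" "convex Q" and K: "compact K"
  obtains D where "\<And>y a b g i. y \<in> K \<Longrightarrow> \<bar>a\<bar> \<le> A \<Longrightarrow> \<bar>b\<bar> \<le> B \<Longrightarrow> \<bar>g\<bar> \<le> G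
    \<Longrightarrow> norm (abp_dir F C Q r a b g i y) \<le> D"
proof -
  have cv: "continuous_on K (\<lambda>y. transpose (jac F y) *v (F y - projQp Q (F y)))"
    using continuous_on_Gfun_direction[OF dF cJ Q] continuous_on_subset by blast
  have cz: "continuous_on K (\<lambda>y. y - closest_point C y)"
    by (intro continuous_intros continuous_on_closest_point C)
  obtain BJ where BJ: "\<And>y. y \<in> K \<Longrightarrow> norm (jac F y) \<le> BJ"
    using continuous_on_compact_bound[OF K continuous_on_subset[OF cJ]] by blast
  obtain Bz where Bz: "\<And>y. y \<in> K \<Longrightarrow> norm (y - closest_point C y) \<le> Bz"
    using continuous_on_compact_bound[OF K cz] by blast
  obtain Bv where Bv: "\<And>y. y \<in> K \<Longrightarrow> norm (transpose (jac F y) *v (F y - projQp Q (F y))) \<le> Bv"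
    using continuous_on_compact_bound[OF K cv] by blast
  show ?thesis
  proof
    fix y a b g i assume y: "y \<in> K" and abg: "\<bar>a\<bar> \<le> A" "\<bar>b\<bar> \<le> B" "\<bar>g\<bar> \<le> G"
    let ?a = "if phi F C r y - philb F C r \<ge> 0 then a else 0"
    have "\<bar>r $ i\<bar> * norm (jac F y $ i) \<le> norm r * BJ"
      using Finite_Cartesian_Product.norm_nth_le[of r i]
        order_trans[OF Finite_Cartesian_Product.norm_nth_le BJ[OF y]]
      by (intro mult_mono) auto
    then have "\<bar>?a\<bar> * (\<bar>r $ i\<bar> * norm (jac F y $ i)) \<le> A * (norm r * BJ)"
      by (rule mult_mono[rotated]) (use abg(1) in auto)
    moreover have "\<bar>b\<bar> * norm (y - closest_point C y) \<le> B * Bz"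
      using abg(2) Bz[OF y] by (intro mult_mono) auto
    moreover have "\<bar>g\<bar> * norm (transpose (jac F y) *v (F y - projQp Q (F y))) \<le> G * Bv"
      using abg(3) Bv[OF y] by (intro mult_mono) auto
    ultimately show "norm (abp_dir F C Q r a b g i y) \<le> A * (norm r * BJ) + B * Bz + G * Bv"
      unfolding abp_dir_def
      by (smt (verit) norm_scaleR norm_triangle_ineq)
  qed
qed

lemma normalized_step_sq_dist_le:
  fixes x w d :: "'a::real_inner"
  assumes "0 < mu" "0 \<le> lam" "P \<le> d \<bullet> (x - w)"
  defines "t \<equiv> lam / max mu (norm d)"
  shows "norm (x - t *\<^sub>R d - w) ^ 2 \<le> norm (x - w) ^ 2 - 2 * t * P + lam ^ 2"
proof -
  have t: "0 \<le> t" "t * norm d \<le> lam"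
    using assms(1,2) unfolding t_def by (auto simp: field_simps mult_left_mono)
  have "norm (x - t *\<^sub>R d - w) ^ 2 = norm (x - w) ^ 2 - 2 * t * (d \<bullet> (x - w)) + (t * norm d) ^ 2"
    unfolding power_mult_distrib power2_norm_eq_inner
    by (simp add: inner_diff_left inner_diff_right inner_commute algebra_simps power2_eq_square)
  also have "\<dots> \<le> norm (x - w) ^ 2 - 2 * t * P + lam ^ 2"
    using mult_left_mono[OF assms(3), of "2 * t"] power_mono[OF t(2), of 2] t(1) by simp
  finally show ?thesis .
qed

lemma summable_of_descent:
  fixes a c e :: "nat \<Rightarrow> real"
  assumes descent: "\<And>k. a (Suc k) \<le> a k - c k + e k"
    and nonneg: "\<And>k. 0 \<le> a k" "\<And>k. 0 \<le> c k" "\<And>k. 0 \<le> e k" and "summable e"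
  shows "summable c" "a k \<le> a 0 + suminf e"
proof -
  have partial: "a n + (\<Sum>k<n. c k) \<le> a 0 + (\<Sum>k<n. e k)" for n
  proof (induction n)
    case (Suc n)
    then show ?case using descent[of n] by simp
  qed simp
  have "(\<Sum>k<n. e k) \<le> suminf e" for n
    using sum_le_suminf[OF \<open>summable e\<close>] nonneg(3) by blast
  then have bound: "a n + (\<Sum>k<n. c k) \<le> a 0 + suminf e" for n
    using partial[of n] by (meson add_left_mono order_trans)
  show "summable c"
  proof (rule summableI_nonneg_bounded)
    show "(\<Sum>k<n. c k) \<le> a 0 + suminf e" for n using bound[of n] nonneg(1)[of n] by linarith
  qed (use nonneg(2) in simp)
  show "a k \<le> a 0 + suminf e"
    using bound[of k] sum_nonneg[of "{..<k}" c, OF nonneg(2)] by linarith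
qed

lemma normalized_descent_summable:
  fixes x d :: "nat \<Rightarrow> 'a::real_inner"
  assumes mu: "0 < mu" and lam: "\<And>k. 0 < lam k" "summable (\<lambda>k. lam k ^ 2)"
    and step: "\<And>k. x (Suc k) = x k - (lam k / max mu (norm (d k))) *\<^sub>R d k"
    and P: "\<And>k. 0 \<le> P k" "\<And>k. P k \<le> d k \<bullet> (x k - w)"
    and dir_bounded: "\<And>R. \<exists>D. \<forall>k. x k \<in> cball w R \<longrightarrow> norm (d k) \<le> D"
  shows "summable (\<lambda>k. lam k * P k)"
proof -
  define t where "t k = lam k / max mu (norm (d k))" for k
  have t_nonneg: "0 \<le> t k" for k unfolding t_def using lam(1) mu by (simp add: less_imp_le)
  have "norm (x (Suc k) - w) ^ 2 \<le> norm (x k - w) ^ 2 - 2 * t k * P k + lam k ^ 2" for k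
    using normalized_step_sq_dist_le[OF mu less_imp_le[OF lam(1)] P(2)] step
    unfolding t_def by simp
  then have "summable (\<lambda>k. 2 * t k * P k)"
    and "norm (x k - w) ^ 2 \<le> norm (x 0 - w) ^ 2 + (\<Sum>j. lam j ^ 2)" for k
    using summable_of_descent[of "\<lambda>k. norm (x k - w) ^ 2" "\<lambda>k. 2 * t k * P k" "\<lambda>k. lam k ^ 2"]
      lam(2) t_nonneg P(1) by auto
  then have "x k \<in> cball w (sqrt (norm (x 0 - w) ^ 2 + (\<Sum>j. lam j ^ 2)))" for k
    using real_le_rsqrt by (simp add: dist_norm norm_minus_commute)
  then obtain D where "norm (d k) \<le> D" for k
    using dir_bounded by blast
  then have "norm (lam k * P k) \<le> max mu D / 2 * (2 * t k * P k)" for k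
  proof -
    have "lam k = t k * max mu (norm (d k))" unfolding t_def using mu by simp
    also have "\<dots> \<le> t k * max mu D"
      using \<open>norm (d k) \<le> D\<close> t_nonneg[of k] by (intro mult_left_mono) auto
    finally have "lam k * P k \<le> t k * max mu D * P k" by (rule mult_right_mono) (fact P(1))
    then show ?thesis using lam(1)[of k] P(1)[of k] by (simp add: mult_ac less_imp_le)
  qed
  moreover have "summable (\<lambda>k. max mu D / 2 * (2 * t k * P k))"
    by (rule summable_mult) fact
  ultimately show ?thesis by (blast intro: summable_comparison_test')
qed

theorem lemma13:
  fixes F :: "real^'n \<Rightarrow> real^'m"
    and C :: "(real^'n) set" and Q :: "(real^'m) set" and r :: "real^'m"
    and x :: "nat \<Rightarrow> real^'n" and istar :: "nat \<Rightarrow> 'm"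
    and mu :: real and alpha beta gamma lam :: "nat \<Rightarrow> real"
    and alo ahi blo bhi glo ghi :: real
  assumes r_pos: "\<forall>i. r $ i > 0" and r_sum: "(\<Sum>i\<in>UNIV. r $ i) = 1"
    and mu_pos: "mu > 0"
    and A1: "\<forall>y. F differentiable (at y)" "continuous_on UNIV (jac F)"
    and A2: "C \<noteq> {}" "closed C" "convex C" "Q \<noteq> {}" "closed Q" "convex Q"
        "\<forall>i. bdd_below ((\<lambda>y. F y $ i) ` C)"
    and A3: "\<forall>i. convex_on UNIV (\<lambda>y. F y $ i)"
    and A4: "Omega F C Q r \<noteq> {}"
    and A5: "\<forall>k. lam k > 0" "\<not> summable lam" "summable (\<lambda>k. (lam k)^2)"
    and A6: "0 < alo" "\<forall>k. alo \<le> alpha k \<and> alpha k \<le> ahi"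
        "0 < blo" "\<forall>k. blo \<le> beta k \<and> beta k \<le> bhi"
        "0 < glo" "\<forall>k. glo \<le> gamma k \<and> gamma k \<le> ghi"
    and A7: "philb F C r = phistar F C Q r"
    and istar: "\<forall>k j. r $ j * (F (x k) $ j - zstar F C j)
                      \<le> r $ istar k * (F (x k) $ istar k - zstar F C (istar k))"
    and iter: "\<forall>k. x (Suc k) = x k -
        (lam k / max mu (norm (abp_dir F C Q r (alpha k) (beta k) (gamma k) (istar k) (x k))))
          *\<^sub>R abp_dir F C Q r (alpha k) (beta k) (gamma k) (istar k) (x k)"
  shows "summable (\<lambda>k. lam k * PhiK F C Q r (alpha k) (beta k) (gamma k) (x k))"
proof -
  obtain w where w: "w \<in> Omega F C Q r" using A4 by blast
  have weights: "0 \<le> alpha k" "alpha k \<le> ahi" "0 \<le> beta k" "beta k \<le> bhi"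
      "0 \<le> gamma k" "gamma k \<le> ghi" for k
    using A6 by (meson less_imp_le order_trans)+
  show ?thesis
  proof (rule normalized_descent_summable[OF mu_pos, where w = w])
    show "PhiK F C Q r (alpha k) (beta k) (gamma k) (x k)
        \<le> abp_dir F C Q r (alpha k) (beta k) (gamma k) (istar k) (x k) \<bullet> (x k - w)" for k
      by (rule PhiK_le_abp_dir_inner[OF r_pos A1(1)[rule_format] A3 A2(1-4,6) w A7])
         (use istar weights in auto)
    show "\<exists>D. \<forall>k. x k \<in> cball w R
        \<longrightarrow> norm (abp_dir F C Q r (alpha k) (beta k) (gamma k) (istar k) (x k)) \<le> D" for R
    proof -
      obtain D where "norm (abp_dir F C Q r a b g i y) \<le> D"
        if "y \<in> cball w R" "\<bar>a\<bar> \<le> ahi" "\<bar>b\<bar> \<le> bhi" "\<bar>g\<bar> \<le> ghi" for y a b g i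
        using abp_dir_bounded_on_compact[OF A1 A2(1-4,6) compact_cball] by blast
      then show ?thesis using weights by (intro exI[of _ D]) simp
    qed
  qed (use A5(1,3) iter weights in \<open>auto intro: PhiK_nonneg\<close>)
qed

end
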